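(* Let $\mathcal C$ be an operadic category and $u$ an object of $\mathcal C$. Then $u$ is trivial if and only if $u$ is a fibre of the identity morphism $1_u$, i.e. $u=1_u^{-1}i$ for some $i\in|u|$.
   Context: Let $\mathcal S$ be a skeleton of the category of finite sets, with objects identified with $\mathbb N$ (where $n=\{1,\dots,n\}$). For each finite set $I$ fix an equivalence $R_I:\mathcal S/I\to\mathcal S^I$ sending $f:J\to I$ to its family of fibres $(f^{-1}i)_{i\in I}$. For a category $\mathcal C$ and object $d$, $\mathcal C/d$ is the slice category and $\mathrm{dom}:\mathcal C/d\to\mathcal C$ the domain functor. An operadic category is a category $\mathcal C$ with a functor $|\cdot|:\mathcal C\to\mathcal S$ (cardinality) and, for each object $c$, a functor $R_c:\mathcal C/c\to\mathcal C^{|c|}$ such that $|\cdot|^{|c|}\circ R_c=R_{|c|}\circ(|\cdot|/c)$, where $|\cdot|/c:\mathcal C/c\to\mathcal S/|c|$ sends $\varphi$ to $|\varphi|$. For $\psi:c\to d$ and $i\in|d|$ write $\psi^{-1}i$ (the $i$-th fibre of $\psi$) for the $i$-th component of $R_d(\psi)$; thus $|\psi^{-1}i|=|\psi|^{-1}i$. For $\varphi:b\to c$, $\psi:c\to d$ write $\varphi^\psi:R_d(\psi\varphi)\to R_d(\psi)$ for the image under $R_d$ of the morphism $\varphi:\psi\varphi\to\psi$ of $\mathcal C/d$, with components $\varphi^\psi_j:(\psi\varphi)^{-1}j\to\psi^{-1}j$. An object $u$ is trivial if $|u|=1$ and $R_u=\mathrm{dom}$ (identifying $\mathcal C^1$ with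 $\mathcal C$). The axioms are: (i) every fibre $1_c^{-1}i$ of an identity morphism is trivial; (ii) (double slice condition) for every $\psi:c\to d$, the functor $R_c\circ(\mathrm{dom}/\psi)$, where $\mathrm{dom}/\psi:(\mathcal C/d)/\psi\to\mathcal C/c$ is the canonical isomorphism, equals the composite $(\mathcal C/d)/\psi\xrightarrow{R_d/\psi}\mathcal C^{|d|}/R_d(\psi)\cong\prod_{j\in|d|}\mathcal C/\psi^{-1}j\xrightarrow{\prod_j R_{\psi^{-1}j}}\prod_{j\in|d|}\mathcal C^{|\psi^{-1}j|}\cong\mathcal C^{|c|}$, the last identification using $|\psi^{-1}j|=|\psi|^{-1}j$ and the canonical bijection $|c|\cong\sum_j|\psi|^{-1}j$ (on objects: $(\varphi^\psi_{|\psi|(i)})^{-1}i=\varphi^{-1}i$ for $\varphi:b\to c$, $i\in|c|$). *)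

theory Defs
  imports Main
begin

text \<open>Morphisms are composed as cmp g f = g o f.
  The skeleton S of finite sets has objects n = {1..n}; the cardinality of a
  morphism is a map on {1..n} (values outside are irrelevant).
  fib phi i is the i-th fibre of phi (the i-th component of R_{cod phi}(phi)),
  fibm phi psi j is the j-th component of R_d applied to the morphism phi : psi o phi -> psi of C/d.\<close>

record ('o, 'm) opcat =
  obj :: "'o set"
  arr :: "'m set"
  dm :: "'m \<Rightarrow> 'o"
  cd :: "'m \<Rightarrow> 'o"
  ident :: "'o \<Rightarrow> 'm"
  cmp :: "'m \<Rightarrow> 'm \<Rightarrow> 'm"
  crd :: "'o \<Rightarrow> nat"
  crdm :: "'m \<Rightarrow> nat \<Rightarrow> nat"
  fib :: "'m \<Rightarrow> nat \<Rightarrow> 'o"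
  fibm :: "'m \<Rightarrow> 'm \<Rightarrow> nat \<Rightarrow> 'm"

definition is_category :: "('o, 'm, 'x) opcat_scheme \<Rightarrow> bool" where
  "is_category C \<longleftrightarrow>
    (\<forall>f\<in>arr C. dm C f \<in> obj C \<and> cd C f \<in> obj C) \<and>
    (\<forall>a\<in>obj C. ident C a \<in> arr C \<and> dm C (ident C a) = a \<and> cd C (ident C a) = a) \<and>
    (\<forall>f\<in>arr C. \<forall>g\<in>arr C. cd C f = dm C g \<longrightarrow>
        cmp C g f \<in> arr C \<and> dm C (cmp C g f) = dm C f \<and> cd C (cmp C g f) = cd C g) \<and>
    (\<forall>f\<in>arr C. cmp C (ident C (cd C f)) f = f \<and> cmp C f (ident C (dm C f)) = f) \<and>
    (\<forall>f\<in>arr C. \<forall>g\<in>arr C. \<forall>h\<in>arr C. cd C f = dm C g \<longrightarrow> cd C g = dm C h \<longrightarrow>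
        cmp C h (cmp C g f) = cmp C (cmp C h g) f)"

text \<open>These fix the equivalences R_I : S/I -> S^I (order-preserving
  identifications of preimages with {1..k}).\<close>

definition preim :: "(nat \<Rightarrow> nat) \<Rightarrow> nat \<Rightarrow> nat \<Rightarrow> nat set" where
  "preim f n j = {k \<in> {1..n}. f k = j}"

definition nth_preim :: "(nat \<Rightarrow> nat) \<Rightarrow> nat \<Rightarrow> nat \<Rightarrow> nat \<Rightarrow> nat" where
  "nth_preim f n j k = sorted_list_of_set (preim f n j) ! (k - 1)"

definition fpos :: "(nat \<Rightarrow> nat) \<Rightarrow> nat \<Rightarrow> nat \<Rightarrow> nat" where
  "fpos f n x = card {x' \<in> {1..n}. f x' = f x \<and> x' \<le> x}"

definition card_functor :: "('o, 'm, 'x) opcat_scheme \<Rightarrow> bool" where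
  "card_functor C \<longleftrightarrow>
    (\<forall>f\<in>arr C. \<forall>i\<in>{1..crd C (dm C f)}. crdm C f i \<in> {1..crd C (cd C f)}) \<and>
    (\<forall>a\<in>obj C. \<forall>i\<in>{1..crd C a}. crdm C (ident C a) i = i) \<and>
    (\<forall>f\<in>arr C. \<forall>g\<in>arr C. cd C f = dm C g \<longrightarrow>
       (\<forall>i\<in>{1..crd C (dm C f)}. crdm C (cmp C g f) i = crdm C g (crdm C f i)))"

text \<open>R_c : C/c -> C^{|c|} is a functor for each c.\<close>
definition fibre_functors :: "('o, 'm, 'x) opcat_scheme \<Rightarrow> bool" where
  "fibre_functors C \<longleftrightarrow>
    (\<forall>f\<in>arr C. \<forall>i\<in>{1..crd C (cd C f)}. fib C f i \<in> obj C) \<and>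
    (\<forall>\<phi>\<in>arr C. \<forall>\<psi>\<in>arr C. cd C \<phi> = dm C \<psi> \<longrightarrow> (\<forall>j\<in>{1..crd C (cd C \<psi>)}.
        fibm C \<phi> \<psi> j \<in> arr C \<and>
        dm C (fibm C \<phi> \<psi> j) = fib C (cmp C \<psi> \<phi>) j \<and>
        cd C (fibm C \<phi> \<psi> j) = fib C \<psi> j)) \<and>
    (\<forall>\<psi>\<in>arr C. \<forall>j\<in>{1..crd C (cd C \<psi>)}.
        fibm C (ident C (dm C \<psi>)) \<psi> j = ident C (fib C \<psi> j)) \<and>
    (\<forall>\<phi>2\<in>arr C. \<forall>\<phi>1\<in>arr C. \<forall>\<psi>\<in>arr C. cd C \<phi>2 = dm C \<phi>1 \<longrightarrow> cd C \<phi>1 = dm C \<psi> \<longrightarrow>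
       (\<forall>j\<in>{1..crd C (cd C \<psi>)}.
         fibm C (cmp C \<phi>1 \<phi>2) \<psi> j = cmp C (fibm C \<phi>1 \<psi> j) (fibm C \<phi>2 (cmp C \<psi> \<phi>1) j)))"

text \<open>|.|^{|c|} o R_c = R_{|c|} o (|.|/c), on objects and on morphisms.\<close>
definition card_compatible :: "('o, 'm, 'x) opcat_scheme \<Rightarrow> bool" where
  "card_compatible C \<longleftrightarrow>
    (\<forall>f\<in>arr C. \<forall>i\<in>{1..crd C (cd C f)}.
        crd C (fib C f i) = card (preim (crdm C f) (crd C (dm C f)) i)) \<and>
    (\<forall>\<phi>\<in>arr C. \<forall>\<psi>\<in>arr C. cd C \<phi> = dm C \<psi> \<longrightarrow> (\<forall>j\<in>{1..crd C (cd C \<psi>)}.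
       \<forall>k\<in>{1..crd C (fib C (cmp C \<psi> \<phi>) j)}.
         crdm C (fibm C \<phi> \<psi> j) k =
           fpos (crdm C \<psi>) (crd C (dm C \<psi>))
             (crdm C \<phi> (nth_preim (crdm C (cmp C \<psi> \<phi>)) (crd C (dm C \<phi>)) j k))))"

text \<open>u is trivial: |u| = 1 and R_u = dom (identifying C^1 with C via the index 1).\<close>
definition trivial_obj :: "('o, 'm, 'x) opcat_scheme \<Rightarrow> 'o \<Rightarrow> bool" where
  "trivial_obj C u \<longleftrightarrow> u \<in> obj C \<and> crd C u = 1 \<and>
    (\<forall>\<phi>\<in>arr C. cd C \<phi> = u \<longrightarrow> fib C \<phi> 1 = dm C \<phi>) \<and>
    (\<forall>\<phi>\<in>arr C. \<forall>\<psi>\<in>arr C. cd C \<phi> = dm C \<psi> \<longrightarrow> cd C \<psi> = u \<longrightarrow> fibm C \<phi> \<psi> 1 = \<phi>)"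

text \<open>Double slice condition, on objects and on morphisms of (C/d)/psi, with
  the identification |c| = sum_j |psi|^{-1} j sending i to (|psi| i, position of i in its fibre).\<close>
definition double_slice :: "('o, 'm, 'x) opcat_scheme \<Rightarrow> bool" where
  "double_slice C \<longleftrightarrow>
    (\<forall>\<psi>\<in>arr C. \<forall>\<phi>\<in>arr C. cd C \<phi> = dm C \<psi> \<longrightarrow> (\<forall>i\<in>{1..crd C (dm C \<psi>)}.
       fib C (fibm C \<phi> \<psi> (crdm C \<psi> i)) (fpos (crdm C \<psi>) (crd C (dm C \<psi>)) i) = fib C \<phi> i)) \<and>
    (\<forall>\<psi>\<in>arr C. \<forall>\<phi>'\<in>arr C. \<forall>\<sigma>\<in>arr C. cd C \<sigma> = dm C \<phi>' \<longrightarrow> cd C \<phi>' = dm C \<psi> \<longrightarrow>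
       (\<forall>i\<in>{1..crd C (dm C \<psi>)}.
         fibm C (fibm C \<sigma> (cmp C \<psi> \<phi>') (crdm C \<psi> i)) (fibm C \<phi>' \<psi> (crdm C \<psi> i))
              (fpos (crdm C \<psi>) (crd C (dm C \<psi>)) i)
         = fibm C \<sigma> \<phi>' i))"

definition operadic_category :: "('o, 'm, 'x) opcat_scheme \<Rightarrow> bool" where
  "operadic_category C \<longleftrightarrow>
    is_category C \<and> card_functor C \<and> fibre_functors C \<and> card_compatible C \<and>
    (\<forall>c\<in>obj C. \<forall>i\<in>{1..crd C c}. trivial_obj C (fib C (ident C c) i)) \<and>
    double_slice C"

end

theory Submission
  imports Defs
begin

text \<open>A trivial object u has a single fibre functor R_u = dom, so the unique fibre
  of 1_u is dom 1_u = u. Conversely, every fibre of an identity is trivial by axiom (i).\<close>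

lemma trivial_obj_eq_fib_ident:
  assumes "is_category C" and "trivial_obj C u"
  shows "fib C (ident C u) 1 = u"
proof -
  have "u \<in> obj C" using assms(2) by (simp add: trivial_obj_def)
  then have "ident C u \<in> arr C" "dm C (ident C u) = u" "cd C (ident C u) = u"
    using assms(1) by (auto simp: is_category_def)
  then show ?thesis using assms(2) by (auto simp: trivial_obj_def)
qed

lemma operadic_category_trivial_fib_ident:
  assumes "operadic_category C" and "c \<in> obj C" and "i \<in> {1..crd C c}"
  shows "trivial_obj C (fib C (ident C c) i)"
  using assms by (simp add: operadic_category_def)

theorem proposition2p3:
  fixes C :: "('o, 'm) opcat" and u :: 'o
  assumes "operadic_category C" and "u \<in> obj C"
  shows "trivial_obj C u \<longleftrightarrow> (\<exists>i\<in>{1..crd C u}. u = fib C (ident C u) i)"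
proof
  assume trivial: "trivial_obj C u"
  have "is_category C" using assms(1) by (simp add: operadic_category_def)
  then have "u = fib C (ident C u) 1" using trivial_obj_eq_fib_ident[OF _ trivial] by simp
  moreover have "crd C u = 1" using trivial by (simp add: trivial_obj_def)
  ultimately show "\<exists>i\<in>{1..crd C u}. u = fib C (ident C u) i" by force
next
  assume "\<exists>i\<in>{1..crd C u}. u = fib C (ident C u) i"
  then obtain i where "i \<in> {1..crd C u}" and "u = fib C (ident C u) i" by blast
  then show "trivial_obj C u"
    using operadic_category_trivial_fib_ident[OF assms] by metis
qed

end
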